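(* Let $1<s_0<s_1$ and let $u$ be a $C^1$ function on $\mathcal{K}_{[s_0,s_1]}$ which vanishes near the conical boundary. Then there is a universal constant $C$ such that for all $s\in[s_0,s_1]$ and $\alpha\in\{0,1,2\}$, $$\|(s/t)u\|_{L^2(\mathcal{H}^*_s)}+\|s(s/t)^2\partial_\alpha u\|_{L^2(\mathcal{H}^*_s)}\leq C\,F_{\mathrm{con}}(s_0;s,u)^{1/2},$$ where $F_{\mathrm{con}}(s_0;s,u)^{1/2}:=\|(s/t)u\|_{L^2(\mathcal{H}_{s_0})}+E_{\mathrm{con}}(s,u)^{1/2}+\int_{s_0}^{s}s'^{-1}E_{\mathrm{con}}(s',u)^{1/2}ds'$.
   Context: Coordinates $(t,x)\in\mathbb{R}^{2+1}$, $r=|x|$, $s=\sqrt{t^2-r^2}$, $\partial_0=\partial_t$. $\mathcal{K}=\{t>r+1\}$, $\mathcal{H}_s=\{t=\sqrt{s^2+r^2}\}$, $\mathcal{H}_s^*=\mathcal{H}_s\cap\mathcal{K}$, $\mathcal{K}_{[s_0,s_1]}=\{(t,x)\in\mathcal{K}: s_0^2\le t^2-r^2\le s_1^2\}$; "vanishes near the conical boundary" means vanishing in a neighbourhood of $\{t=r+1\}$. $\|f\|_{L^2(\mathcal{H}_s)}$ is the $L^2(\mathbb{R}^2)$ norm of $x\mapsto f(\sqrt{s^2+|x|^2},x)$ (restricted to $|x|\le (s^2-1)/2$ for $\mathcal{H}_s^*$); $\int_{\mathcal{H}_s}f\,dx$ is defined likewise. $\bar\partial_s=(s/t)\partial_t$,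 $\bar\partial_a=(x^a/t)\partial_t+\partial_a$, $K:=s\bar\partial_s+2x^a\bar\partial_a$, $E_{\mathrm{con}}(s,u):=\int_{\mathcal{H}_s}\big((Ku+u)^2+\sum_a|s\bar\partial_a u|^2\big)dx$. *)

theory Defs
  imports "HOL-Analysis.Analysis"
begin

text \<open>Points of R^{2+1} are pairs (t, x) with t :: real and x = (x1, x2) :: real \<times> real;
  the norm on real \<times> real is the Euclidean one, so norm x = r = |x|.\<close>

type_synonym pt = "real \<times> (real \<times> real)"

definition Kcone :: "pt set" where
  "Kcone = {(t, x). t > norm x + 1}"

definition hs :: "pt \<Rightarrow> real" where
  "hs p = sqrt ((fst p)\<^sup>2 - (norm (snd p))\<^sup>2)"

definition Kslab :: "real \<Rightarrow> real \<Rightarrow> pt set" where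
  "Kslab s0 s1 = {(t, x). (t, x) \<in> Kcone \<and> s0\<^sup>2 \<le> t\<^sup>2 - (norm x)\<^sup>2 \<and> t\<^sup>2 - (norm x)\<^sup>2 \<le> s1\<^sup>2}"

definition hyp :: "real \<Rightarrow> real \<times> real \<Rightarrow> pt" where
  "hyp s x = (sqrt (s\<^sup>2 + (norm x)\<^sup>2), x)"

text \<open>H_s^* = H_s \<inter> K corresponds to |x| < (s^2-1)/2\<close>
definition L2Hstar :: "real \<Rightarrow> (pt \<Rightarrow> real) \<Rightarrow> real" where
  "L2Hstar s f = sqrt (integral (ball 0 ((s\<^sup>2 - 1) / 2)) (\<lambda>x. (f (hyp s x))\<^sup>2))"

text \<open>C^1 on a (not necessarily open) set S: C^1 on some open neighbourhood of S\<close>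
definition C1_on :: "pt set \<Rightarrow> (pt \<Rightarrow> real) \<Rightarrow> bool" where
  "C1_on S u \<longleftrightarrow> (\<exists>U u'. open U \<and> S \<subseteq> U \<and>
      (\<forall>p\<in>U. (u has_derivative u' p) (at p)) \<and>
      (\<forall>v. continuous_on U (\<lambda>p. u' p v)))"

definition vanishes_near_cone_boundary :: "pt set \<Rightarrow> (pt \<Rightarrow> real) \<Rightarrow> bool" where
  "vanishes_near_cone_boundary S u \<longleftrightarrow> (\<exists>N. open N \<and> {(t, x). t = norm x + 1} \<subseteq> N \<and>
      (\<forall>p\<in>N \<inter> S. u p = 0))"

definition edir :: "nat \<Rightarrow> pt" where
  "edir \<alpha> = (if \<alpha> = 0 then (1, 0, 0) else if \<alpha> = 1 then (0, 1, 0) else (0, 0, 1))"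

definition pd :: "(pt \<Rightarrow> real) \<Rightarrow> nat \<Rightarrow> pt \<Rightarrow> real" where
  "pd u \<alpha> p = frechet_derivative u (at p) (edir \<alpha>)"

definition pbar :: "(pt \<Rightarrow> real) \<Rightarrow> nat \<Rightarrow> pt \<Rightarrow> real" where
  "pbar u a p = (if a = 1 then fst (snd p) else snd (snd p)) / fst p * pd u 0 p + pd u a p"

text \<open>K u = s \<bar>\<partial>_s u + 2 x^a \<bar>\<partial>_a u, with \<bar>\<partial>_s = (s/t)\<partial>_t\<close>
definition Kop :: "(pt \<Rightarrow> real) \<Rightarrow> pt \<Rightarrow> real" where
  "Kop u p = hs p * (hs p / fst p) * pd u 0 p
      + 2 * (fst (snd p) * pbar u 1 p + snd (snd p) * pbar u 2 p)"

text \<open>E_con(s,u); u lives on K, so the integral over H_s is over H_s^*\<close>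
definition Econ :: "real \<Rightarrow> (pt \<Rightarrow> real) \<Rightarrow> real" where
  "Econ s u = integral (ball 0 ((s\<^sup>2 - 1) / 2))
     (\<lambda>x. (Kop u (hyp s x) + u (hyp s x))\<^sup>2
          + (s * pbar u 1 (hyp s x))\<^sup>2 + (s * pbar u 2 (hyp s x))\<^sup>2)"

definition Fcon_sqrt :: "real \<Rightarrow> real \<Rightarrow> (pt \<Rightarrow> real) \<Rightarrow> real" where
  "Fcon_sqrt s0 s u = L2Hstar s0 (\<lambda>p. hs p / fst p * u p) + sqrt (Econ s u)
     + integral {s0..s} (\<lambda>s'. sqrt (Econ s' u) / s')"

end

(* Differentiate M(s) = ||(s/t) u||^2 on H*_s in s along the hyperbolae s |-> (sqrt (s^2 + |x|^2), x)
   with x fixed.  As u vanishes near the cone, the integrands extended by zero off H*_s are continuous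
   in (s, x), so M and E_con become parameter integrals over one fixed box and M' can be computed under
   the integral sign.  Pointwise, s d_s ((s/t) u)^2 <= 2 (s/t) u Y with Y = s (s/t)^2 d_t u + (s/t) u,
   and Y is a combination of K u + u and s bar-d_a u with coefficients s/t and x^a/t of modulus at most 1,
   so |Y| <= 5 e^(1/2) for the energy density e.  Integrating the AM-GM inequality and optimising its
   weight gives s M' <= 10 (M E_con)^(1/2), i.e. sqrt M(s) <= sqrt M(s0) + 5 int_{s0}^s E_con^(1/2) / s'.
   The same identities bound s (s/t)^2 d_alpha u pointwise by |(s/t) u| + 6 e^(1/2). *)

theory Submission
  imports Defs
begin

lemma two_mult_le_weighted_sum:
  fixes x y \<mu> :: real
  assumes "0 < \<mu>"
  shows "2 * x * y \<le> \<mu> * x\<^sup>2 + y\<^sup>2 / \<mu>"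
proof -
  have "0 \<le> (\<mu> * x - y)\<^sup>2 / \<mu>"
    using assms by simp
  also have "\<dots> = \<mu> * x\<^sup>2 + y\<^sup>2 / \<mu> - 2 * x * y"
    using assms by (simp add: power2_eq_square field_simps)
  finally show ?thesis
    by simp
qed

lemma le_two_sqrt_mult_of_weighted_bounds:
  fixes X A B :: real
  assumes le: "\<And>\<mu>. 0 < \<mu> \<Longrightarrow> X \<le> \<mu> * A + B / \<mu>" and "0 \<le> A" "0 \<le> B"
  shows "X \<le> 2 * sqrt (A * B)"
proof -
  have bound: "X \<le> 2 * sqrt ((A + \<delta>) * (B + \<delta>))" if "0 < \<delta>" for \<delta>
  proof -
    let ?a = "sqrt (A + \<delta>)" and ?b = "sqrt (B + \<delta>)"
    have a: "0 < ?a" "?a * ?a = A + \<delta>" and b: "0 < ?b" "?b * ?b = B + \<delta>"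
      using that assms(2,3) by simp_all
    have "X \<le> ?b / ?a * A + B / (?b / ?a)"
      using a b by (intro le) simp
    also have "\<dots> \<le> ?b / ?a * (A + \<delta>) + (B + \<delta>) / (?b / ?a)"
      using a b that by (intro add_mono mult_left_mono divide_right_mono) auto
    also have "\<dots> = 2 * (?a * ?b)"
      using a b by (simp add: field_simps)
    finally show ?thesis
      by (simp add: real_sqrt_mult)
  qed
  have "((\<lambda>\<delta>. 2 * sqrt ((A + \<delta>) * (B + \<delta>))) \<longlongrightarrow> 2 * sqrt ((A + 0) * (B + 0))) (at_right 0)"
    by (intro tendsto_intros)
  moreover have "\<forall>\<^sub>F \<delta> in at_right 0. X \<le> 2 * sqrt ((A + \<delta>) * (B + \<delta>))"
    using eventually_at_right_less by (rule eventually_mono) (rule bound)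
  ultimately show ?thesis
    using tendsto_lowerbound trivial_limit_at_right_real by fastforce
qed

text \<open>\<open>\<surd>(I + \<epsilon>) - \<integral>\<^sub>a\<^sup>x c\<close> is non-increasing for every \<open>\<epsilon> > 0\<close>; let \<open>\<epsilon> \<rightarrow> 0\<close>.\<close>

lemma sqrt_le_sqrt_add_integral_of_deriv_le:
  fixes I I' c :: "real \<Rightarrow> real"
  assumes "a \<le> b" and contI: "continuous_on {a..b} I" and contc: "continuous_on {a..b} c"
    and I': "\<And>x. a < x \<Longrightarrow> x < b \<Longrightarrow> (I has_real_derivative I' x) (at x)"
    and I'_le: "\<And>x. a < x \<Longrightarrow> x < b \<Longrightarrow> I' x \<le> 2 * sqrt (I x) * c x"
    and I_nonneg: "\<And>x. a \<le> x \<Longrightarrow> x \<le> b \<Longrightarrow> 0 \<le> I x"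
    and c_nonneg: "\<And>x. a \<le> x \<Longrightarrow> x \<le> b \<Longrightarrow> 0 \<le> c x"
  shows "sqrt (I b) \<le> sqrt (I a) + integral {a..b} c"
proof -
  have bound: "sqrt (I b + \<epsilon>) \<le> sqrt (I a + \<epsilon>) + integral {a..b} c" if "0 < \<epsilon>" for \<epsilon>
  proof -
    define G where "G x = sqrt (I x + \<epsilon>) - integral {a..x} c" for x
    have "G b \<le> G a"
    proof (rule DERIV_nonpos_imp_decreasing_open[OF assms(1)])
      fix x
      assume x: "a < x" "x < b"
      have pos: "0 < sqrt (I x + \<epsilon>)"
        using I_nonneg[of x] x that by simp
      have "((\<lambda>x. integral {a..x} c) has_real_derivative c x) (at x)"
        using integral_has_real_derivative[OF contc, of x] x by (simp add: at_within_Icc_at)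
      then have "(G has_real_derivative I' x / (2 * sqrt (I x + \<epsilon>)) - c x) (at x)"
        unfolding G_def using I'[OF x] pos
        by (auto intro!: derivative_eq_intros simp: field_simps)
      moreover have "2 * sqrt (I x) * c x \<le> 2 * sqrt (I x + \<epsilon>) * c x"
        using c_nonneg[of x] x that by (intro mult_right_mono) auto
      then have "I' x \<le> 2 * sqrt (I x + \<epsilon>) * c x"
        using I'_le[OF x] by linarith
      then have "I' x / (2 * sqrt (I x + \<epsilon>)) - c x \<le> 0"
        using pos by (simp add: pos_divide_le_eq mult.commute)
      ultimately show "\<exists>y. (G has_real_derivative y) (at x) \<and> y \<le> 0"
        by blast
    next
      show "continuous_on {a..b} G"
        unfolding G_def using integrable_continuous_real[OF contc]
        by (intro continuous_intros contI indefinite_integral_continuous_1)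
    qed
    then show ?thesis
      by (simp add: G_def)
  qed
  have "((\<lambda>\<epsilon>. sqrt (I b + \<epsilon>)) \<longlongrightarrow> sqrt (I b + 0)) (at_right 0)"
    "((\<lambda>\<epsilon>. sqrt (I a + \<epsilon>) + integral {a..b} c) \<longlongrightarrow> sqrt (I a + 0) + integral {a..b} c) (at_right 0)"
    by (intro tendsto_intros)+
  moreover have "\<forall>\<^sub>F \<epsilon> in at_right 0. sqrt (I b + \<epsilon>) \<le> sqrt (I a + \<epsilon>) + integral {a..b} c"
    using eventually_at_right_less by (rule eventually_mono) (rule bound)
  ultimately show ?thesis
    using tendsto_le[OF trivial_limit_at_right_real] by fastforce
qed

lemma frechet_derivative_eq_0_if_vanishes_on_open:
  assumes "open V" "q \<in> V" "\<And>y. y \<in> V \<Longrightarrow> f y = 0"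
  shows "frechet_derivative f (at q) = (\<lambda>_. 0)"
proof -
  have "(f has_derivative (\<lambda>_. 0)) (at q)"
    by (rule has_derivative_transform_within_open[OF has_derivative_const assms(1,2)]) (simp add: assms(3))
  then show ?thesis
    by (rule frechet_derivative_at[symmetric])
qed

lemma at_within_Ioo_neq_bot:
  fixes a b c :: real
  assumes "a < b" "c \<in> {a..b}"
  shows "at c within {a<..<b} \<noteq> bot"
proof -
  have "c islimpt closure {a<..<b}"
    using assms by (intro islimpt_closure_open[OF open_greaterThanLessThan refl])
      (simp add: closure_greaterThanLessThan)
  then show ?thesis
    by (simp add: trivial_limit_within limpt_of_closure)
qed

lemma has_real_derivative_sqrt_sq_add:
  fixes c s :: real
  assumes "0 < s" "0 \<le> c"
  shows "((\<lambda>\<sigma>. sqrt (\<sigma>\<^sup>2 + c)) has_real_derivative s / sqrt (s\<^sup>2 + c)) (at s)"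
proof -
  have "0 < s\<^sup>2 + c"
    using assms by (simp add: add_pos_nonneg)
  then show ?thesis
    by (auto intro!: derivative_eq_intros simp: field_simps)
qed

lemma has_real_derivative_div_sqrt_sq_add:
  fixes c s :: real
  assumes "0 < s" "0 \<le> c"
  shows "((\<lambda>\<sigma>. \<sigma> / sqrt (\<sigma>\<^sup>2 + c)) has_real_derivative c / sqrt (s\<^sup>2 + c) ^ 3) (at s)"
proof -
  let ?t = "sqrt (s\<^sup>2 + c)"
  have t: "0 < ?t" "?t\<^sup>2 = s\<^sup>2 + c"
    using assms by (simp_all add: add_pos_nonneg)
  have D: "((\<lambda>\<sigma>. \<sigma> / sqrt (\<sigma>\<^sup>2 + c)) has_real_derivative (1 * ?t - s * (s / ?t)) / (?t * ?t)) (at s)"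
    by (rule DERIV_divide[OF DERIV_ident has_real_derivative_sqrt_sq_add[OF assms]]) (use t(1) in linarith)
  have "(1 * ?t - s * (s / ?t)) / (?t * ?t) = (?t\<^sup>2 - s\<^sup>2) / ?t ^ 3"
    using t(1) by (simp add: field_simps power2_eq_square power3_eq_cube)
  also have "\<dots> = c / ?t ^ 3"
    using t(2) by simp
  finally show ?thesis
    using D by (simp only:)
qed

section \<open>Hyperboloids in the cone\<close>

lemma fst_hyp [simp]: "fst (hyp s x) = sqrt (s\<^sup>2 + (norm x)\<^sup>2)"
  by (simp add: hyp_def)

lemma snd_hyp [simp]: "snd (hyp s x) = x"
  by (simp add: hyp_def)

lemma hs_hyp: "0 \<le> s \<Longrightarrow> hs (hyp s x) = s"
  by (simp add: hs_def hyp_def)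

lemma Kcone_iff: "p \<in> Kcone \<longleftrightarrow> norm (snd p) + 1 < fst p"
  by (cases p) (simp add: Kcone_def)

lemma Kcone_bounds:
  assumes "p \<in> Kcone"
  shows "0 < fst p" "norm (snd p) < fst p" "\<bar>fst (snd p)\<bar> \<le> fst p" "\<bar>snd (snd p)\<bar> \<le> fst p"
    "(hs p)\<^sup>2 = (fst p)\<^sup>2 - (norm (snd p))\<^sup>2" "0 \<le> hs p" "hs p \<le> fst p"
proof -
  have "norm (snd p) + 1 < fst p"
    using assms by (simp add: Kcone_iff)
  then show r: "norm (snd p) < fst p" and t: "0 < fst p"
    using norm_ge_zero[of "snd p"] by linarith+
  show "\<bar>fst (snd p)\<bar> \<le> fst p" "\<bar>snd (snd p)\<bar> \<le> fst p"
    using r norm_fst_le[of "fst (snd p)" "snd (snd p)"] norm_snd_le[of "snd (snd p)" "fst (snd p)"]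
    by auto
  have "(norm (snd p))\<^sup>2 \<le> (fst p)\<^sup>2"
    using r by (intro power_mono) auto
  then show "(hs p)\<^sup>2 = (fst p)\<^sup>2 - (norm (snd p))\<^sup>2" "0 \<le> hs p"
    by (simp_all add: hs_def)
  have "hs p \<le> sqrt ((fst p)\<^sup>2)"
    unfolding hs_def by (rule real_sqrt_le_mono) simp
  then show "hs p \<le> fst p"
    using t by simp
qed

lemma hyp_hs: "p \<in> Kcone \<Longrightarrow> hyp (hs p) (snd p) = p"
  using Kcone_bounds[of p] by (cases p) (simp add: hyp_def)

lemma Kslab_iff:
  assumes "0 \<le> s0" "0 \<le> s1"
  shows "p \<in> Kslab s0 s1 \<longleftrightarrow> p \<in> Kcone \<and> s0 \<le> hs p \<and> hs p \<le> s1"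
proof -
  have "p \<in> Kslab s0 s1 \<longleftrightarrow> p \<in> Kcone \<and> s0\<^sup>2 \<le> (hs p)\<^sup>2 \<and> (hs p)\<^sup>2 \<le> s1\<^sup>2"
    using Kcone_bounds(5)[of p] by (cases p) (auto simp: Kslab_def)
  then show ?thesis
    using assms Kcone_bounds(6)[of p] by (auto simp: power_mono_iff)
qed

lemma hyp_in_Kcone_iff:
  assumes "0 < s"
  shows "hyp s x \<in> Kcone \<longleftrightarrow> norm x < (s\<^sup>2 - 1) / 2"
proof -
  have "hyp s x \<in> Kcone \<longleftrightarrow> sqrt ((norm x + 1)\<^sup>2) < sqrt (s\<^sup>2 + (norm x)\<^sup>2)"
    by (simp add: Kcone_def hyp_def)
  also have "\<dots> \<longleftrightarrow> norm x < (s\<^sup>2 - 1) / 2"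
    by (simp add: power2_eq_square field_simps)
  finally show ?thesis .
qed

lemma hyp_in_Kslab:
  assumes "0 < s0" "s0 \<le> s" "s \<le> s1" "norm x < (s\<^sup>2 - 1) / 2"
  shows "hyp s x \<in> Kslab s0 s1"
  using assms by (simp add: Kslab_iff hyp_in_Kcone_iff hs_hyp)

lemma hyp_on_cone_boundary:
  assumes "norm x = (s\<^sup>2 - 1) / 2"
  shows "hyp s x \<in> {(t, x). t = norm x + 1}"
proof -
  have "s\<^sup>2 + (norm x)\<^sup>2 = (norm x + 1)\<^sup>2"
    using assms by (simp add: power2_eq_square field_simps)
  then show ?thesis
    by (simp add: hyp_def)
qed

lemma isCont_hyp_pair: "isCont (\<lambda>z. hyp (fst z) (snd z)) z"
  unfolding hyp_def by (intro continuous_intros)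

lemma isCont_hyp: "isCont (\<lambda>s. hyp s x) s"
  unfolding hyp_def by (intro continuous_intros)

lemma open_Kcone: "open Kcone"
proof -
  have eq: "Kcone = {p. norm (snd p) + 1 < fst p}"
    using Kcone_iff by blast
  show ?thesis
    unfolding eq by (intro open_Collect_less continuous_intros)
qed

lemma continuous_on_hs: "continuous_on A hs"
  unfolding hs_def by (intro continuous_intros)

lemma has_real_derivative_along_hyp:
  assumes "(f has_derivative f') (at (hyp s x))" "0 < s"
  shows "((\<lambda>\<sigma>. f (hyp \<sigma> x)) has_real_derivative s / sqrt (s\<^sup>2 + (norm x)\<^sup>2) * f' (1, 0, 0)) (at s)"
proof -
  let ?c = "s / sqrt (s\<^sup>2 + (norm x)\<^sup>2)"
  have "((\<lambda>\<sigma>. sqrt (\<sigma>\<^sup>2 + (norm x)\<^sup>2)) has_real_derivative ?c) (at s)"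
    using assms(2) by (rule has_real_derivative_sqrt_sq_add) simp
  then have "((\<lambda>\<sigma>. hyp \<sigma> x) has_vector_derivative ?c *\<^sub>R (1, 0, 0)) (at s)"
    unfolding hyp_def has_real_derivative_iff_has_vector_derivative
    by (auto intro!: derivative_eq_intros simp: zero_prod_def)
  from has_derivative_compose[OF this[unfolded has_vector_derivative_def] assms(1)]
  have "((\<lambda>\<sigma>. f (hyp \<sigma> x)) has_derivative (\<lambda>h. f' ((h * ?c) *\<^sub>R (1, 0, 0)))) (at s)"
    by simp
  moreover have "(\<lambda>h. f' ((h * ?c) *\<^sub>R (1, 0, 0))) = (*) (?c * f' (1, 0, 0))"
    by (rule ext) (simp only: linear_scale[OF has_derivative_linear[OF assms(1)]] real_scaleR_def mult_ac)
  ultimately show ?thesis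
    by (simp add: has_field_derivative_def)
qed

section \<open>Extension by zero off the truncated hyperboloids\<close>

definition hyp_zero_ext :: "(pt \<Rightarrow> real) \<Rightarrow> real \<times> (real \<times> real) \<Rightarrow> real" where
  "hyp_zero_ext g z = (if norm (snd z) < ((fst z)\<^sup>2 - 1) / 2 then g (hyp (fst z) (snd z)) else 0)"

lemma hyp_zero_ext_Pair:
  "hyp_zero_ext g (\<sigma>, x) = (if norm x < (\<sigma>\<^sup>2 - 1) / 2 then g (hyp \<sigma> x) else 0)"
  by (simp add: hyp_zero_ext_def)

lemma integral_ball_eq_integral_cbox:
  fixes g :: "real \<times> real \<Rightarrow> real"
  assumes "r \<le> R"
  shows "integral (ball 0 r) g = integral (cbox (-R, -R) (R, R)) (\<lambda>x. if x \<in> ball 0 r then g x else 0)"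
proof -
  have sub: "ball 0 r \<subseteq> cbox (-R, -R) (R, R)"
  proof
    fix x :: "real \<times> real"
    assume "x \<in> ball 0 r"
    then have "\<bar>fst x\<bar> < R" "\<bar>snd x\<bar> < R"
      using assms norm_fst_le[of "fst x" "snd x"] norm_snd_le[of "snd x" "fst x"] by auto
    then show "x \<in> cbox (-R, -R) (R, R)"
      by (cases x) (auto simp: cbox_Pair_eq)
  qed
  show ?thesis
    by (simp only: integral_restrict_Int) (simp add: sub Int_absorb1 Int_absorb2)
qed

locale cone_slab =
  fixes s0 s1 :: real and N :: "pt set"
  assumes s0_pos: "0 < s0" and s0_less_s1: "s0 < s1"
    and open_N: "open N" and cone_boundary_subset_N: "{(t, x). t = norm x + 1} \<subseteq> N"
begin

lemma hyp_zero_ext_eventually_zero: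
  assumes g0: "\<forall>p\<in>N \<inter> Kslab s0 s1. g p = 0" and x: "(\<sigma>\<^sup>2 - 1) / 2 \<le> norm x"
  shows "\<forall>\<^sub>F z in nhds (\<sigma>, x). fst z \<in> {s0..s1} \<longrightarrow> hyp_zero_ext g z = 0"
proof (cases "(\<sigma>\<^sup>2 - 1) / 2 < norm x")
  case True
  have "open {z :: real \<times> (real \<times> real). ((fst z)\<^sup>2 - 1) / 2 < norm (snd z)}"
    by (intro open_Collect_less continuous_intros) auto
  then have "\<forall>\<^sub>F z in nhds (\<sigma>, x). z \<in> {z. ((fst z)\<^sup>2 - 1) / 2 < norm (snd z)}"
    by (rule eventually_nhds_in_open) (use True in simp)
  then show ?thesis
    by eventually_elim (simp add: hyp_zero_ext_def)
next
  case False
  let ?H = "\<lambda>z. hyp (fst z) (snd z)"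
  have "open (?H -` N)"
    by (intro continuous_open_vimage open_N isCont_hyp_pair allI)
  moreover have "(\<sigma>, x) \<in> ?H -` N"
    using False x hyp_on_cone_boundary[of x \<sigma>] cone_boundary_subset_N by auto
  ultimately have "\<forall>\<^sub>F z in nhds (\<sigma>, x). z \<in> ?H -` N"
    by (rule eventually_nhds_in_open)
  then show ?thesis
  proof (rule eventually_mono, intro impI)
    fix z :: "real \<times> (real \<times> real)"
    assume "z \<in> ?H -` N" "fst z \<in> {s0..s1}"
    then show "hyp_zero_ext g z = 0"
      using g0 hyp_in_Kslab[OF s0_pos, of "fst z" s1 "snd z"] by (auto simp: hyp_zero_ext_def)
  qed
qed

lemma continuous_on_hyp_zero_ext:
  assumes "open V" "Kslab s0 s1 \<subseteq> V" "continuous_on V g" and g0: "\<forall>p\<in>N \<inter> Kslab s0 s1. g p = 0"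
  shows "continuous_on ({s0..s1} \<times> UNIV) (hyp_zero_ext g)"
  unfolding continuous_on_eq_continuous_within
proof
  fix z :: "real \<times> (real \<times> real)"
  assume z: "z \<in> {s0..s1} \<times> UNIV"
  let ?H = "\<lambda>z. hyp (fst z) (snd z)"
  show "continuous (at z within {s0..s1} \<times> UNIV) (hyp_zero_ext g)"
  proof (cases "norm (snd z) < ((fst z)\<^sup>2 - 1) / 2")
    case True
    have "open {z :: real \<times> (real \<times> real). norm (snd z) < ((fst z)\<^sup>2 - 1) / 2}"
      by (intro open_Collect_less continuous_intros) auto
    then have "\<forall>\<^sub>F y in nhds z. norm (snd y) < ((fst y)\<^sup>2 - 1) / 2"
      using True by (auto dest: eventually_nhds_in_open)
    then have ev: "\<forall>\<^sub>F y in nhds z. hyp_zero_ext g y = (g \<circ> ?H) y"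
      by eventually_elim (simp add: hyp_zero_ext_def)
    have "?H z \<in> V"
      using True z assms(2) hyp_in_Kslab[OF s0_pos] by auto
    then have "isCont g (?H z)"
      using assms(1,3) by (simp add: continuous_on_eq_continuous_at)
    then have "isCont (g \<circ> ?H) z"
      by (intro continuous_at_compose isCont_hyp_pair)
    then have "isCont (hyp_zero_ext g) z"
      by (simp only: isCont_cong[OF ev])
    then show ?thesis
      by (rule continuous_at_imp_continuous_within)
  next
    case False
    then have "((fst z)\<^sup>2 - 1) / 2 \<le> norm (snd z)"
      by linarith
    from hyp_zero_ext_eventually_zero[OF g0 this]
    have "\<forall>\<^sub>F y in nhds z. fst y \<in> {s0..s1} \<longrightarrow> hyp_zero_ext g y = 0"
      by (simp only: prod.collapse)
    then have "\<forall>\<^sub>F y in at z within {s0..s1} \<times> UNIV. hyp_zero_ext g y = 0"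
      unfolding eventually_at_filter by (rule eventually_mono) (simp add: mem_Times_iff)
    moreover have "hyp_zero_ext g z = 0"
      using False by (simp add: hyp_zero_ext_def)
    ultimately show ?thesis
      unfolding continuous_within by (simp add: tendsto_eventually)
  qed
qed

lemma has_real_derivative_hyp_zero_ext:
  assumes \<sigma>: "\<sigma> \<in> {s0<..<s1}" and g0: "\<forall>p\<in>N \<inter> Kslab s0 s1. g p = 0"
    and g': "norm x < (\<sigma>\<^sup>2 - 1) / 2 \<Longrightarrow> ((\<lambda>\<tau>. g (hyp \<tau> x)) has_real_derivative g' (hyp \<sigma> x)) (at \<sigma>)"
  shows "((\<lambda>\<tau>. hyp_zero_ext g (\<tau>, x)) has_real_derivative hyp_zero_ext g' (\<sigma>, x)) (at \<sigma>)"
proof (cases "norm x < (\<sigma>\<^sup>2 - 1) / 2")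
  case True
  have "open {\<tau>. norm x < (\<tau>\<^sup>2 - 1) / 2}"
    by (intro open_Collect_less continuous_intros) auto
  then have "\<forall>\<^sub>F \<tau> in nhds \<sigma>. norm x < (\<tau>\<^sup>2 - 1) / 2"
    using True by (auto dest: eventually_nhds_in_open)
  then have "\<forall>\<^sub>F \<tau> in nhds \<sigma>. hyp_zero_ext g (\<tau>, x) = g (hyp \<tau> x)"
    by eventually_elim (simp add: hyp_zero_ext_def)
  then show ?thesis
    using g'[OF True] True by (simp add: DERIV_cong_ev hyp_zero_ext_def)
next
  case False
  have "((\<lambda>\<tau>. (\<tau>, x)) \<longlongrightarrow> (\<sigma>, x)) (nhds \<sigma>)"
    by (intro tendsto_intros filterlim_ident)
  from eventually_compose_filterlim[OF hyp_zero_ext_eventually_zero[OF g0] this] False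
  have "\<forall>\<^sub>F \<tau> in nhds \<sigma>. \<tau> \<in> {s0..s1} \<longrightarrow> hyp_zero_ext g (\<tau>, x) = 0"
    by simp
  moreover have "\<forall>\<^sub>F \<tau> in nhds \<sigma>. \<tau> \<in> {s0<..<s1}"
    by (rule eventually_nhds_in_open) (use \<sigma> in auto)
  ultimately have "\<forall>\<^sub>F \<tau> in nhds \<sigma>. hyp_zero_ext g (\<tau>, x) = 0"
    by eventually_elim auto
  then show ?thesis
    using False by (simp add: DERIV_cong_ev hyp_zero_ext_def)
qed

definition slice_box :: "(real \<times> real) set" where
  "slice_box = cbox (- s1\<^sup>2, - s1\<^sup>2) (s1\<^sup>2, s1\<^sup>2)"

definition hyp_integral :: "(pt \<Rightarrow> real) \<Rightarrow> real \<Rightarrow> real" where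
  "hyp_integral g \<sigma> = integral slice_box (\<lambda>x. hyp_zero_ext g (\<sigma>, x))"

lemma integral_Hstar_eq_hyp_integral:
  assumes "\<sigma> \<in> {s0..s1}"
  shows "integral (ball 0 ((\<sigma>\<^sup>2 - 1) / 2)) (\<lambda>x. g (hyp \<sigma> x)) = hyp_integral g \<sigma>"
proof -
  have "\<sigma>\<^sup>2 \<le> s1\<^sup>2"
    using assms s0_pos by (intro power_mono) auto
  then have "(\<sigma>\<^sup>2 - 1) / 2 \<le> s1\<^sup>2"
    using zero_le_power2[of s1] by (simp only: pos_divide_le_eq[OF zero_less_numeral])
  then have "integral (ball 0 ((\<sigma>\<^sup>2 - 1) / 2)) (\<lambda>x. g (hyp \<sigma> x))
      = integral slice_box (\<lambda>x. if x \<in> ball 0 ((\<sigma>\<^sup>2 - 1) / 2) then g (hyp \<sigma> x) else 0)"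
    unfolding slice_box_def by (rule integral_ball_eq_integral_cbox)
  then show ?thesis
    by (simp add: hyp_integral_def hyp_zero_ext_Pair)
qed

lemma L2Hstar_eq_sqrt_hyp_integral:
  "\<sigma> \<in> {s0..s1} \<Longrightarrow> L2Hstar \<sigma> f = sqrt (hyp_integral (\<lambda>p. (f p)\<^sup>2) \<sigma>)"
  using integral_Hstar_eq_hyp_integral[of \<sigma> "\<lambda>p. (f p)\<^sup>2"] by (simp add: L2Hstar_def)

definition admissible :: "(pt \<Rightarrow> real) \<Rightarrow> bool" where
  "admissible g \<longleftrightarrow> (\<exists>V. open V \<and> Kslab s0 s1 \<subseteq> V \<and> continuous_on V g) \<and> (\<forall>p\<in>N \<inter> Kslab s0 s1. g p = 0)"

lemma continuous_on_hyp_zero_ext_admissible: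
  assumes "admissible g"
  shows "continuous_on ({s0..s1} \<times> UNIV) (hyp_zero_ext g)"
proof -
  obtain V where "open V" "Kslab s0 s1 \<subseteq> V" "continuous_on V g" "\<forall>p\<in>N \<inter> Kslab s0 s1. g p = 0"
    using assms by (auto simp: admissible_def)
  then show ?thesis
    by (rule continuous_on_hyp_zero_ext)
qed

lemma integrable_hyp_zero_ext:
  assumes "admissible g" "\<sigma> \<in> {s0..s1}"
  shows "(\<lambda>x. hyp_zero_ext g (\<sigma>, x)) integrable_on slice_box"
proof -
  have "continuous_on slice_box (\<lambda>x. hyp_zero_ext g (\<sigma>, x))"
    by (rule continuous_on_compose2[OF continuous_on_hyp_zero_ext_admissible[OF assms(1)]])
      (use assms(2) in \<open>auto intro: continuous_on_Pair continuous_on_const continuous_on_id\<close>)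
  then show ?thesis
    unfolding slice_box_def by (rule integrable_continuous)
qed

lemma continuous_on_hyp_integral:
  assumes "admissible g"
  shows "continuous_on {s0..s1} (hyp_integral g)"
proof -
  have "continuous_on ({s0..s1} \<times> slice_box) (hyp_zero_ext g)"
    by (rule continuous_on_subset[OF continuous_on_hyp_zero_ext_admissible[OF assms]]) auto
  then show ?thesis
    unfolding hyp_integral_def slice_box_def by (intro integral_continuous_on_param) simp
qed

lemma hyp_integral_nonneg:
  assumes "admissible g" "\<sigma> \<in> {s0..s1}" "\<And>p. p \<in> Kcone \<Longrightarrow> 0 \<le> g p"
  shows "0 \<le> hyp_integral g \<sigma>"
  unfolding hyp_integral_def
proof (rule integral_nonneg[OF integrable_hyp_zero_ext[OF assms(1,2)]])
  fix x
  show "0 \<le> hyp_zero_ext g (\<sigma>, x)"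
    using assms(2,3) s0_pos hyp_in_Kcone_iff[of \<sigma> x] by (simp add: hyp_zero_ext_def)
qed

lemma hyp_integral_le_lincomb:
  assumes "admissible g" "admissible h1" "admissible h2" "\<sigma> \<in> {s0..s1}"
    and le: "\<And>x. norm x < (\<sigma>\<^sup>2 - 1) / 2 \<Longrightarrow> g (hyp \<sigma> x) \<le> c * h1 (hyp \<sigma> x) + d * h2 (hyp \<sigma> x)"
  shows "hyp_integral g \<sigma> \<le> c * hyp_integral h1 \<sigma> + d * hyp_integral h2 \<sigma>"
proof -
  note int = integrable_hyp_zero_ext[OF _ assms(4)]
  have "hyp_integral g \<sigma> \<le> integral slice_box (\<lambda>x. c * hyp_zero_ext h1 (\<sigma>, x) + d * hyp_zero_ext h2 (\<sigma>, x))"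
    unfolding hyp_integral_def
  proof (rule integral_le)
    show "(\<lambda>x. c * hyp_zero_ext h1 (\<sigma>, x) + d * hyp_zero_ext h2 (\<sigma>, x)) integrable_on slice_box"
      by (intro integrable_add integrable_on_mult_right int assms(2,3))
  next
    fix x
    show "hyp_zero_ext g (\<sigma>, x) \<le> c * hyp_zero_ext h1 (\<sigma>, x) + d * hyp_zero_ext h2 (\<sigma>, x)"
      using le[of x] by (simp add: hyp_zero_ext_Pair)
  qed (rule int[OF assms(1)])
  also have "\<dots> = c * hyp_integral h1 \<sigma> + d * hyp_integral h2 \<sigma>"
    unfolding hyp_integral_def
    by (simp add: integral_add integral_mult_right integrable_on_mult_right int assms(2,3))
  finally show ?thesis .
qed

lemma has_real_derivative_hyp_integral:
  assumes "admissible g" "admissible g'" "\<sigma> \<in> {s0<..<s1}"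
    and g': "\<And>\<tau> x. \<tau> \<in> {s0<..<s1} \<Longrightarrow> norm x < (\<tau>\<^sup>2 - 1) / 2 \<Longrightarrow>
      ((\<lambda>\<tau>. g (hyp \<tau> x)) has_real_derivative g' (hyp \<tau> x)) (at \<tau>)"
  shows "(hyp_integral g has_real_derivative hyp_integral g' \<sigma>) (at \<sigma>)"
proof -
  have "(hyp_integral g has_real_derivative hyp_integral g' \<sigma>) (at \<sigma> within {s0<..<s1})"
    unfolding hyp_integral_def slice_box_def
  proof (rule leibniz_rule_field_derivative[where f = "\<lambda>\<tau> x. hyp_zero_ext g (\<tau>, x)"
        and fx = "\<lambda>\<tau> x. hyp_zero_ext g' (\<tau>, x)"])
    fix \<tau> x
    assume \<tau>: "\<tau> \<in> {s0<..<s1}"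
    have "\<forall>p\<in>N \<inter> Kslab s0 s1. g p = 0"
      using assms(1) by (simp add: admissible_def)
    from has_real_derivative_hyp_zero_ext[where g = g and g' = g' and x = x, OF \<tau> this g'[OF \<tau>]]
    show "((\<lambda>\<tau>. hyp_zero_ext g (\<tau>, x)) has_real_derivative hyp_zero_ext g' (\<tau>, x)) (at \<tau> within {s0<..<s1})"
      by (rule has_field_derivative_at_within)
  next
    fix \<tau> :: real
    assume "\<tau> \<in> {s0<..<s1}"
    then show "(\<lambda>x. hyp_zero_ext g (\<tau>, x)) integrable_on cbox (- s1\<^sup>2, - s1\<^sup>2) (s1\<^sup>2, s1\<^sup>2)"
      using integrable_hyp_zero_ext[OF assms(1), of \<tau>] by (simp add: slice_box_def)
  next
    have "continuous_on ({s0<..<s1} \<times> cbox (- s1\<^sup>2, - s1\<^sup>2) (s1\<^sup>2, s1\<^sup>2)) (hyp_zero_ext g')"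
      by (rule continuous_on_subset[OF continuous_on_hyp_zero_ext_admissible[OF assms(2)]])
        (auto simp: mem_Times_iff)
    then show "continuous_on ({s0<..<s1} \<times> cbox (- s1\<^sup>2, - s1\<^sup>2) (s1\<^sup>2, s1\<^sup>2))
        (\<lambda>(\<tau>, x). hyp_zero_ext g' (\<tau>, x))"
      by (simp add: case_prod_beta')
  next
    show "convex {s0<..<s1}"
      by (rule convex_real_interval)
  qed (rule assms(3))
  then show ?thesis
    by (simp only: at_within_open[OF assms(3) open_greaterThanLessThan])
qed

end

section \<open>Pointwise bounds by the conformal energy density\<close>

definition energy_density :: "(pt \<Rightarrow> real) \<Rightarrow> pt \<Rightarrow> real" where
  "energy_density u p = (Kop u p + u p)\<^sup>2 + (hs p * pbar u 1 p)\<^sup>2 + (hs p * pbar u 2 p)\<^sup>2"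

lemma pbar_1: "pbar u 1 p = fst (snd p) / fst p * pd u 0 p + pd u 1 p"
  and pbar_2: "pbar u 2 p = snd (snd p) / fst p * pd u 0 p + pd u 2 p"
  by (simp_all add: pbar_def)

lemma Econ_eq_integral_energy_density:
  "0 \<le> s \<Longrightarrow> Econ s u = integral (ball 0 ((s\<^sup>2 - 1) / 2)) (\<lambda>x. energy_density u (hyp s x))"
  by (simp add: Econ_def energy_density_def hs_hyp)

lemma energy_density_nonneg: "0 \<le> energy_density u p"
  by (simp add: energy_density_def)

lemma abs_le_sqrt_energy_density:
  "\<bar>Kop u p + u p\<bar> \<le> sqrt (energy_density u p)"
  "\<bar>hs p * pbar u 1 p\<bar> \<le> sqrt (energy_density u p)"
  "\<bar>hs p * pbar u 2 p\<bar> \<le> sqrt (energy_density u p)"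
  unfolding energy_density_def real_sqrt_abs[symmetric]
  by (intro real_sqrt_le_mono; simp)+

lemma abs_mult_le_of_abs_le_one: "\<bar>c\<bar> \<le> 1 \<Longrightarrow> \<bar>c * y\<bar> \<le> \<bar>y\<bar>"
  for c y :: real
  by (simp add: abs_mult mult_left_le_one_le)

lemma weighted_dt_identity:
  assumes "fst p \<noteq> 0"
  shows "hs p * (hs p / fst p)\<^sup>2 * pd u 0 p + hs p / fst p * u p
    = hs p / fst p * (Kop u p + u p) - 2 * (fst (snd p) / fst p) * (hs p * pbar u 1 p)
      - 2 * (snd (snd p) / fst p) * (hs p * pbar u 2 p)"
  using assms by (simp add: Kop_def pbar_def power2_eq_square field_simps)

lemma weighted_dx_identity:
  assumes "fst p \<noteq> 0"
  shows "hs p * (hs p / fst p)\<^sup>2 * pd u 1 p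
      = (hs p / fst p)\<^sup>2 * (hs p * pbar u 1 p) - fst (snd p) / fst p * (hs p * (hs p / fst p)\<^sup>2 * pd u 0 p)"
    "hs p * (hs p / fst p)\<^sup>2 * pd u 2 p
      = (hs p / fst p)\<^sup>2 * (hs p * pbar u 2 p) - snd (snd p) / fst p * (hs p * (hs p / fst p)\<^sup>2 * pd u 0 p)"
  using assms by (simp_all add: pbar_def power2_eq_square field_simps)

lemma Kcone_coefficient_bounds:
  assumes "p \<in> Kcone"
  shows "\<bar>hs p / fst p\<bar> \<le> 1" "\<bar>fst (snd p) / fst p\<bar> \<le> 1" "\<bar>snd (snd p) / fst p\<bar> \<le> 1"
    "\<bar>(hs p / fst p)\<^sup>2\<bar> \<le> 1"
proof -
  note b = Kcone_bounds[OF assms]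
  show c: "\<bar>hs p / fst p\<bar> \<le> 1"
    using b by (simp add: abs_divide)
  show "\<bar>fst (snd p) / fst p\<bar> \<le> 1" "\<bar>snd (snd p) / fst p\<bar> \<le> 1"
    using b by (simp_all add: abs_divide)
  show "\<bar>(hs p / fst p)\<^sup>2\<bar> \<le> 1"
    using c by (simp add: abs_square_le_1)
qed

lemma abs_weighted_dt_add_le:
  assumes "p \<in> Kcone"
  shows "\<bar>hs p * (hs p / fst p)\<^sup>2 * pd u 0 p + hs p / fst p * u p\<bar> \<le> 5 * sqrt (energy_density u p)"
proof -
  note c = Kcone_coefficient_bounds[OF assms] and e = abs_le_sqrt_energy_density[where u = u and p = p]
  have "\<bar>hs p / fst p * (Kop u p + u p)\<bar> \<le> sqrt (energy_density u p)"
    using abs_mult_le_of_abs_le_one[OF c(1)] e(1) by (rule order_trans)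
  moreover have "\<bar>fst (snd p) / fst p * (hs p * pbar u 1 p)\<bar> \<le> sqrt (energy_density u p)"
    using abs_mult_le_of_abs_le_one[OF c(2)] e(2) by (rule order_trans)
  moreover have "\<bar>snd (snd p) / fst p * (hs p * pbar u 2 p)\<bar> \<le> sqrt (energy_density u p)"
    using abs_mult_le_of_abs_le_one[OF c(3)] e(3) by (rule order_trans)
  ultimately show ?thesis
    unfolding weighted_dt_identity[OF Kcone_bounds(1)[OF assms, THEN less_imp_neq, symmetric]]
    by linarith
qed

lemma abs_weighted_derivative_le:
  assumes "p \<in> Kcone" "\<alpha> \<in> {0, 1, 2}"
  shows "\<bar>hs p * (hs p / fst p)\<^sup>2 * pd u \<alpha> p\<bar> \<le> \<bar>hs p / fst p * u p\<bar> + 6 * sqrt (energy_density u p)"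
proof -
  note c = Kcone_coefficient_bounds[OF assms(1)] and e = abs_le_sqrt_energy_density[where u = u and p = p]
  have t0: "fst p \<noteq> 0"
    using Kcone_bounds(1)[OF assms(1)] by simp
  have dt: "\<bar>hs p * (hs p / fst p)\<^sup>2 * pd u 0 p\<bar> \<le> \<bar>hs p / fst p * u p\<bar> + 5 * sqrt (energy_density u p)"
    using abs_weighted_dt_add_le[OF assms(1), of u] by linarith
  consider "\<alpha> = 0" | "\<alpha> = 1" | "\<alpha> = 2"
    using assms(2) by blast
  then show ?thesis
  proof cases
    case 1
    have "0 \<le> sqrt (energy_density u p)"
      by (simp add: energy_density_nonneg)
    then show ?thesis
      unfolding 1 using dt by linarith
  next
    case 2
    have "\<bar>(hs p / fst p)\<^sup>2 * (hs p * pbar u 1 p)\<bar> \<le> sqrt (energy_density u p)"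
      using abs_mult_le_of_abs_le_one[OF c(4)] e(2) by (rule order_trans)
    moreover have "\<bar>fst (snd p) / fst p * (hs p * (hs p / fst p)\<^sup>2 * pd u 0 p)\<bar>
        \<le> \<bar>hs p * (hs p / fst p)\<^sup>2 * pd u 0 p\<bar>"
      by (rule abs_mult_le_of_abs_le_one[OF c(2)])
    ultimately show ?thesis
      unfolding 2 weighted_dx_identity(1)[OF t0] using dt abs_triangle_ineq4 by (smt (verit))
  next
    case 3
    have "\<bar>(hs p / fst p)\<^sup>2 * (hs p * pbar u 2 p)\<bar> \<le> sqrt (energy_density u p)"
      using abs_mult_le_of_abs_le_one[OF c(4)] e(3) by (rule order_trans)
    moreover have "\<bar>snd (snd p) / fst p * (hs p * (hs p / fst p)\<^sup>2 * pd u 0 p)\<bar>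
        \<le> \<bar>hs p * (hs p / fst p)\<^sup>2 * pd u 0 p\<bar>"
      by (rule abs_mult_le_of_abs_le_one[OF c(3)])
    ultimately show ?thesis
      unfolding 3 weighted_dx_identity(2)[OF t0] using dt abs_triangle_ineq4 by (smt (verit))
  qed
qed

lemma weighted_derivative_sq_le:
  assumes "p \<in> Kcone" "\<alpha> \<in> {0, 1, 2}"
  shows "(hs p * (hs p / fst p)\<^sup>2 * pd u \<alpha> p)\<^sup>2 \<le> 4 * (hs p / fst p * u p)\<^sup>2 + 81 * energy_density u p"
proof -
  let ?a = "\<bar>hs p / fst p * u p\<bar>" and ?e = "sqrt (energy_density u p)"
  have "\<bar>hs p * (hs p / fst p)\<^sup>2 * pd u \<alpha> p\<bar>\<^sup>2 \<le> (?a + 6 * ?e)\<^sup>2"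
    using abs_weighted_derivative_le[OF assms, of u] by (rule power_mono) simp
  then have "(hs p * (hs p / fst p)\<^sup>2 * pd u \<alpha> p)\<^sup>2 \<le> (?a + 6 * ?e)\<^sup>2"
    by simp
  also have "\<dots> = ?a\<^sup>2 + 36 * ?e\<^sup>2 + 2 * ?a * (6 * ?e)"
    by (simp add: power2_sum power_mult_distrib)
  also have "\<dots> \<le> 4 * ?a\<^sup>2 + 81 * ?e\<^sup>2"
  proof -
    have "2 * ?a * (6 * ?e) \<le> ?a\<^sup>2 + 36 * ?e\<^sup>2"
      using two_mult_le_weighted_sum[of 1 ?a "6 * ?e"] by (simp add: power_mult_distrib)
    then show ?thesis
      using zero_le_power2[of ?a] zero_le_power2[of ?e] by linarith
  qed
  finally show ?thesis
    by (simp only: power2_abs) (simp add: energy_density_nonneg)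
qed

text \<open>The derivative of \<open>((s/t) u)\<^sup>2\<close> along \<open>\<sigma> \<mapsto> (\<surd>(\<sigma>\<^sup>2 + |x|\<^sup>2), x)\<close>, from
  \<open>\<partial>\<^sub>\<sigma>(\<sigma>/t) = |x|\<^sup>2/t\<^sup>3\<close> and \<open>\<partial>\<^sub>\<sigma>u = (\<sigma>/t) \<partial>\<^sub>t u\<close>.\<close>

definition weighted_sq_dsigma :: "(pt \<Rightarrow> real) \<Rightarrow> pt \<Rightarrow> real" where
  "weighted_sq_dsigma u p = 2 * (hs p / fst p * u p)
     * ((norm (snd p))\<^sup>2 / (fst p) ^ 3 * u p + (hs p / fst p)\<^sup>2 * pd u 0 p)"

lemma hs_mult_weighted_sq_dsigma_le:
  assumes "p \<in> Kcone" "0 < \<mu>"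
  shows "hs p * weighted_sq_dsigma u p \<le> \<mu> * (hs p / fst p * u p)\<^sup>2 + 25 * energy_density u p / \<mu>"
proof -
  let ?a = "hs p / fst p * u p" and ?Y = "hs p * (hs p / fst p)\<^sup>2 * pd u 0 p + hs p / fst p * u p"
    and ?e = "sqrt (energy_density u p)"
  note b = Kcone_bounds[OF assms(1)]
  have r2: "(norm (snd p))\<^sup>2 = (fst p)\<^sup>2 - (hs p)\<^sup>2"
    using b(5) by simp
  have "hs p * weighted_sq_dsigma u p = 2 * (?a * ?Y) - 2 * ((hs p / fst p)\<^sup>2 * ?a\<^sup>2)"
    unfolding weighted_sq_dsigma_def r2 using b(1)
    by (simp add: power2_eq_square power3_eq_cube field_simps)
  moreover have "?a * ?Y \<le> \<bar>?a\<bar> * (5 * ?e)"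
  proof -
    have "?a * ?Y \<le> \<bar>?a\<bar> * \<bar>?Y\<bar>"
      by (simp only: abs_mult[symmetric] abs_ge_self)
    also have "\<dots> \<le> \<bar>?a\<bar> * (5 * ?e)"
      using abs_weighted_dt_add_le[OF assms(1), of u] by (rule mult_left_mono) simp
    finally show ?thesis .
  qed
  moreover have "2 * (\<bar>?a\<bar> * (5 * ?e)) \<le> \<mu> * \<bar>?a\<bar>\<^sup>2 + (5 * ?e)\<^sup>2 / \<mu>"
    using two_mult_le_weighted_sum[OF assms(2)] by (simp only: mult.assoc)
  moreover have "0 \<le> (hs p / fst p)\<^sup>2 * ?a\<^sup>2"
    by simp
  ultimately have "hs p * weighted_sq_dsigma u p \<le> \<mu> * \<bar>?a\<bar>\<^sup>2 + (5 * ?e)\<^sup>2 / \<mu>"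
    by linarith
  then show ?thesis
    by (simp only: power2_abs) (simp add: power_mult_distrib energy_density_nonneg)
qed

locale conformal_energy_setting = cone_slab +
  fixes u :: "pt \<Rightarrow> real" and U :: "pt set" and u' :: "pt \<Rightarrow> pt \<Rightarrow> real"
  assumes open_U: "open U" and Kslab_subset_U: "Kslab s0 s1 \<subseteq> U"
    and u_has_derivative: "\<And>p. p \<in> U \<Longrightarrow> (u has_derivative u' p) (at p)"
    and continuous_on_u': "\<And>v. continuous_on U (\<lambda>p. u' p v)"
    and u_vanishes: "\<And>p. p \<in> N \<inter> Kslab s0 s1 \<Longrightarrow> u p = 0"
begin

lemma pd_eq_u': "p \<in> U \<Longrightarrow> pd u k p = u' p (edir k)"
  using u_has_derivative frechet_derivative_at unfolding pd_def by metis

lemma continuous_on_pd: "continuous_on U (pd u k)"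
  using continuous_on_u'[of "edir k"] by (rule continuous_on_eq) (simp add: pd_eq_u')

lemma continuous_on_u: "continuous_on U u"
  using u_has_derivative has_derivative_continuous continuous_at_imp_continuous_on by blast

lemma mem_Kslab: "p \<in> Kslab s0 s1 \<longleftrightarrow> p \<in> Kcone \<and> s0 \<le> hs p \<and> hs p \<le> s1"
  using s0_pos s0_less_s1 by (intro Kslab_iff) auto

lemma pd_vanishes_inside:
  assumes q: "q \<in> N \<inter> U \<inter> Kcone" "s0 < hs q" "hs q < s1"
  shows "pd u k q = 0"
proof -
  define V where "V = N \<inter> U \<inter> Kcone \<inter> {q. s0 < hs q} \<inter> {q. hs q < s1}"
  have "open V"
    unfolding V_def
    by (intro open_Int open_N open_U open_Kcone open_Collect_less continuous_on_hs continuous_on_const)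
  have sub: "V \<subseteq> N \<inter> Kslab s0 s1"
  proof
    fix y
    assume "y \<in> V"
    then have "y \<in> N" "y \<in> Kcone" "s0 < hs y" "hs y < s1"
      by (simp_all add: V_def)
    then show "y \<in> N \<inter> Kslab s0 s1"
      by (simp add: mem_Kslab)
  qed
  have "q \<in> V"
    using q by (simp add: V_def)
  then have "frechet_derivative u (at q) = (\<lambda>_. 0)"
  proof (rule frechet_derivative_eq_0_if_vanishes_on_open[OF \<open>open V\<close>])
    fix y
    assume "y \<in> V"
    then show "u y = 0"
      by (intro u_vanishes subsetD[OF sub])
  qed
  then show ?thesis
    by (simp add: pd_def)
qed

text \<open>On the faces \<open>s = s\<^sub>0\<close>, \<open>s = s\<^sub>1\<close> of the slab \<open>u\<close> vanishes only on one side, so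
  there the derivative is reached as a limit along the hyperbola through the point.\<close>

lemma pd_vanishes:
  assumes p: "p \<in> N \<inter> Kslab s0 s1"
  shows "pd u k p = 0"
proof -
  have pK: "p \<in> Kcone" and s: "hs p \<in> {s0..s1}" and pU: "p \<in> U"
    using p Kslab_subset_U by (auto simp only: mem_Kslab IntD2 atLeastAtMost_iff)
  define x where "x = snd p"
  have hp: "hyp (hs p) x = p"
    unfolding x_def by (rule hyp_hs[OF pK])
  let ?F = "at (hs p) within {s0<..<s1}"
  have "isCont (pd u k) p"
    using continuous_on_eq_continuous_at[OF open_U] continuous_on_pd pU by blast
  then have "isCont (pd u k) (hyp (hs p) x)"
    by (simp only: hp)
  then have "isCont (\<lambda>\<sigma>. pd u k (hyp \<sigma> x)) (hs p)"
    by (rule continuous_at_compose[OF isCont_hyp, unfolded o_def])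
  then have lim: "((\<lambda>\<sigma>. pd u k (hyp \<sigma> x)) \<longlongrightarrow> pd u k p) ?F"
    using hp by (simp add: isCont_def tendsto_within_subset[OF _ subset_UNIV])
  have "\<forall>\<^sub>F \<sigma> in ?F. pd u k (hyp \<sigma> x) = 0"
  proof -
    have "open ((\<lambda>\<sigma>. hyp \<sigma> x) -` (N \<inter> U \<inter> Kcone))"
      by (intro continuous_open_vimage open_Int open_N open_U open_Kcone isCont_hyp allI)
    moreover have "hs p \<in> (\<lambda>\<sigma>. hyp \<sigma> x) -` (N \<inter> U \<inter> Kcone)"
      using hp p pK pU by simp
    ultimately have "\<forall>\<^sub>F \<sigma> in nhds (hs p). \<sigma> \<in> (\<lambda>\<sigma>. hyp \<sigma> x) -` (N \<inter> U \<inter> Kcone)"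
      by (rule eventually_nhds_in_open)
    then show ?thesis
      unfolding eventually_at_filter
    proof (rule eventually_mono, intro impI)
      fix \<sigma>
      assume "\<sigma> \<in> (\<lambda>\<sigma>. hyp \<sigma> x) -` (N \<inter> U \<inter> Kcone)" "\<sigma> \<in> {s0<..<s1}"
      then show "pd u k (hyp \<sigma> x) = 0"
        using s0_pos by (intro pd_vanishes_inside) (auto simp: hs_hyp)
    qed
  qed
  then have "((\<lambda>\<sigma>. pd u k (hyp \<sigma> x)) \<longlongrightarrow> 0) ?F"
    by (rule tendsto_eventually)
  with lim show ?thesis
    by (rule tendsto_unique[OF at_within_Ioo_neq_bot[OF s0_less_s1 s]])
qed

lemma admissibleI:
  assumes "continuous_on (U \<inter> Kcone) g" "\<And>p. p \<in> N \<inter> Kslab s0 s1 \<Longrightarrow> g p = 0"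
  shows "admissible g"
proof -
  have "Kslab s0 s1 \<subseteq> U \<inter> Kcone"
    using Kslab_subset_U by (auto simp: Kslab_def)
  then show ?thesis
    using assms open_U open_Kcone by (auto simp: admissible_def)
qed

lemma continuous_on_U_Kcone:
  "continuous_on (U \<inter> Kcone) u" "continuous_on (U \<inter> Kcone) (pd u k)" "continuous_on (U \<inter> Kcone) hs"
  using continuous_on_subset[OF continuous_on_u] continuous_on_subset[OF continuous_on_pd]
    continuous_on_hs by auto

lemma admissible_densities:
  "admissible (\<lambda>p. (hs p / fst p * u p)\<^sup>2)"
  "admissible (energy_density u)"
  "admissible (\<lambda>p. (hs p * (hs p / fst p)\<^sup>2 * pd u k p)\<^sup>2)"
  "admissible (weighted_sq_dsigma u)"
proof -
  have t: "fst p \<noteq> 0" if "p \<in> U \<inter> Kcone" for p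
    using Kcone_bounds(1)[of p] that by simp
  note intros = continuous_intros continuous_on_U_Kcone
  show "admissible (\<lambda>p. (hs p / fst p * u p)\<^sup>2)"
    by (intro admissibleI intros; simp add: t u_vanishes)
  show "admissible (energy_density u)"
    unfolding energy_density_def Kop_def pbar_1 pbar_2
    by (intro admissibleI intros; simp add: t u_vanishes pd_vanishes)
  show "admissible (\<lambda>p. (hs p * (hs p / fst p)\<^sup>2 * pd u k p)\<^sup>2)"
    by (intro admissibleI intros; simp add: t pd_vanishes)
  show "admissible (weighted_sq_dsigma u)"
    unfolding weighted_sq_dsigma_def
    by (intro admissibleI intros; simp add: t u_vanishes)
qed

abbreviation mass :: "real \<Rightarrow> real" where
  "mass \<equiv> hyp_integral (\<lambda>p. (hs p / fst p * u p)\<^sup>2)"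

lemma Econ_eq_hyp_integral: "\<sigma> \<in> {s0..s1} \<Longrightarrow> Econ \<sigma> u = hyp_integral (energy_density u) \<sigma>"
  using s0_pos by (simp add: Econ_eq_integral_energy_density integral_Hstar_eq_hyp_integral)

lemma Econ_nonneg: "\<sigma> \<in> {s0..s1} \<Longrightarrow> 0 \<le> Econ \<sigma> u"
  unfolding Econ_eq_hyp_integral
  by (rule hyp_integral_nonneg[OF admissible_densities(2) _ energy_density_nonneg])

lemma continuous_on_sqrt_Econ_div: "continuous_on {s0..s1} (\<lambda>\<sigma>. sqrt (Econ \<sigma> u) / \<sigma>)"
proof -
  have "continuous_on {s0..s1} (\<lambda>\<sigma>. sqrt (hyp_integral (energy_density u) \<sigma>) / \<sigma>)"
    using s0_pos by (intro continuous_intros continuous_on_hyp_integral admissible_densities) auto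
  then show ?thesis
    by (rule continuous_on_eq) (simp add: Econ_eq_hyp_integral)
qed

lemma has_real_derivative_weighted_sq:
  assumes \<sigma>: "0 < \<sigma>" and U: "hyp \<sigma> x \<in> U"
  shows "((\<lambda>\<tau>. (hs (hyp \<tau> x) / fst (hyp \<tau> x) * u (hyp \<tau> x))\<^sup>2) has_real_derivative
    weighted_sq_dsigma u (hyp \<sigma> x)) (at \<sigma>)"
proof -
  let ?t = "\<lambda>\<tau>. sqrt (\<tau>\<^sup>2 + (norm x)\<^sup>2)"
  have dw: "((\<lambda>\<tau>. \<tau> / ?t \<tau>) has_real_derivative (norm x)\<^sup>2 / ?t \<sigma> ^ 3) (at \<sigma>)"
    using \<sigma> by (rule has_real_derivative_div_sqrt_sq_add) simp
  have du: "((\<lambda>\<tau>. u (hyp \<tau> x)) has_real_derivative \<sigma> / ?t \<sigma> * pd u 0 (hyp \<sigma> x)) (at \<sigma>)"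
    using has_real_derivative_along_hyp[OF u_has_derivative[OF U] \<sigma>] pd_eq_u'[OF U]
    by (simp add: edir_def)
  have val: "of_nat 2 * (((norm x)\<^sup>2 / ?t \<sigma> ^ 3 * u (hyp \<sigma> x) + \<sigma> / ?t \<sigma> * pd u 0 (hyp \<sigma> x) * (\<sigma> / ?t \<sigma>))
      * (\<sigma> / ?t \<sigma> * u (hyp \<sigma> x)) ^ (2 - Suc 0)) = weighted_sq_dsigma u (hyp \<sigma> x)"
    using \<sigma> by (simp add: weighted_sq_dsigma_def hs_hyp power2_eq_square algebra_simps)
  have D: "((\<lambda>\<tau>. (\<tau> / ?t \<tau> * u (hyp \<tau> x))\<^sup>2) has_real_derivative
      weighted_sq_dsigma u (hyp \<sigma> x)) (at \<sigma>)"
    by (rule DERIV_power[OF DERIV_mult[OF dw du], of 2, unfolded val])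
  have "\<forall>\<^sub>F \<tau> in nhds \<sigma>. \<tau> \<in> {0<..}"
    using \<sigma> by (intro eventually_nhds_in_open) auto
  then have ev: "\<forall>\<^sub>F \<tau> in nhds \<sigma>. (hs (hyp \<tau> x) / fst (hyp \<tau> x) * u (hyp \<tau> x))\<^sup>2
      = (\<tau> / ?t \<tau> * u (hyp \<tau> x))\<^sup>2"
    by eventually_elim (simp add: hs_hyp)
  show ?thesis
    unfolding DERIV_cong_ev[OF refl ev refl] by (rule D)
qed

lemma has_real_derivative_mass:
  assumes "\<sigma> \<in> {s0<..<s1}"
  shows "(mass has_real_derivative hyp_integral (weighted_sq_dsigma u) \<sigma>) (at \<sigma>)"
proof (rule has_real_derivative_hyp_integral[OF admissible_densities(1,4) assms])
  fix \<tau> :: real and x :: "real \<times> real"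
  assume "\<tau> \<in> {s0<..<s1}" "norm x < (\<tau>\<^sup>2 - 1) / 2"
  then have "0 < \<tau>" "hyp \<tau> x \<in> U"
    using s0_pos hyp_in_Kslab[OF s0_pos, of \<tau> s1 x] Kslab_subset_U by auto
  then show "((\<lambda>\<tau>. (hs (hyp \<tau> x) / fst (hyp \<tau> x) * u (hyp \<tau> x))\<^sup>2) has_real_derivative
      weighted_sq_dsigma u (hyp \<tau> x)) (at \<tau>)"
    by (rule has_real_derivative_weighted_sq)
qed

lemma mass_derivative_le:
  assumes \<sigma>: "\<sigma> \<in> {s0<..<s1}"
  shows "hyp_integral (weighted_sq_dsigma u) \<sigma> \<le> 2 * sqrt (mass \<sigma>) * (5 * sqrt (Econ \<sigma> u) / \<sigma>)"
proof -
  let ?D = "hyp_integral (weighted_sq_dsigma u) \<sigma>" and ?E = "hyp_integral (energy_density u) \<sigma>"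
  have \<sigma>': "\<sigma> \<in> {s0..s1}" and \<sigma>_pos: "0 < \<sigma>"
    using \<sigma> s0_pos by auto
  have "\<sigma> * ?D \<le> \<mu> * mass \<sigma> + 25 * ?E / \<mu>" if \<mu>: "0 < \<mu>" for \<mu>
  proof -
    have divide: "D \<le> \<mu> / \<sigma> * A + 25 / (\<mu> * \<sigma>) * e" if "\<sigma> * D \<le> \<mu> * A + 25 * e / \<mu>" for D A e
      using that \<sigma>_pos \<mu> by (simp add: field_simps)
    have multiply: "\<sigma> * D \<le> \<mu> * A + 25 * e / \<mu>" if "D \<le> \<mu> / \<sigma> * A + 25 / (\<mu> * \<sigma>) * e" for D A e
      using that \<sigma>_pos \<mu> by (simp add: field_simps)
    have "?D \<le> \<mu> / \<sigma> * mass \<sigma> + 25 / (\<mu> * \<sigma>) * ?E"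
    proof (rule hyp_integral_le_lincomb[OF admissible_densities(4,1,2) \<sigma>'])
      fix x :: "real \<times> real"
      assume "norm x < (\<sigma>\<^sup>2 - 1) / 2"
      then have "hyp \<sigma> x \<in> Kcone"
        using \<sigma>_pos hyp_in_Kcone_iff by blast
      from hs_mult_weighted_sq_dsigma_le[OF this \<mu>, of u]
      show "weighted_sq_dsigma u (hyp \<sigma> x)
          \<le> \<mu> / \<sigma> * (hs (hyp \<sigma> x) / fst (hyp \<sigma> x) * u (hyp \<sigma> x))\<^sup>2 + 25 / (\<mu> * \<sigma>) * energy_density u (hyp \<sigma> x)"
        unfolding hs_hyp[OF less_imp_le[OF \<sigma>_pos]] by (rule divide)
    qed
    then show ?thesis
      by (rule multiply)
  qed
  then have "\<sigma> * ?D \<le> 2 * sqrt (mass \<sigma> * (25 * ?E))"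
    by (rule le_two_sqrt_mult_of_weighted_bounds)
      (use hyp_integral_nonneg[OF admissible_densities(1) \<sigma>'] hyp_integral_nonneg[OF admissible_densities(2) \<sigma>']
        energy_density_nonneg in auto)
  then show ?thesis
    using \<sigma>_pos \<sigma>' by (simp add: Econ_eq_hyp_integral real_sqrt_mult field_simps)
qed

lemma sqrt_mass_le:
  assumes s: "s \<in> {s0..s1}"
  shows "sqrt (mass s) \<le> sqrt (mass s0) + 5 * integral {s0..s} (\<lambda>\<sigma>. sqrt (Econ \<sigma> u) / \<sigma>)"
proof -
  let ?c = "\<lambda>\<sigma>. 5 * (sqrt (Econ \<sigma> u) / \<sigma>)"
  have sub: "{s0..s} \<subseteq> {s0..s1}"
    using s by auto
  have "sqrt (mass s) \<le> sqrt (mass s0) + integral {s0..s} ?c"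
  proof (rule sqrt_le_sqrt_add_integral_of_deriv_le)
    show "continuous_on {s0..s} mass"
      by (rule continuous_on_subset[OF continuous_on_hyp_integral[OF admissible_densities(1)] sub])
    show "continuous_on {s0..s} ?c"
      by (intro continuous_intros continuous_on_subset[OF continuous_on_sqrt_Econ_div sub])
  next
    fix \<sigma>
    assume "s0 < \<sigma>" "\<sigma> < s"
    then have \<sigma>: "\<sigma> \<in> {s0<..<s1}"
      using s by auto
    show "(mass has_real_derivative hyp_integral (weighted_sq_dsigma u) \<sigma>) (at \<sigma>)"
      by (rule has_real_derivative_mass[OF \<sigma>])
    show "hyp_integral (weighted_sq_dsigma u) \<sigma> \<le> 2 * sqrt (mass \<sigma>) * ?c \<sigma>"
      using mass_derivative_le[OF \<sigma>] by simp
  next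
    fix \<sigma>
    assume "s0 \<le> \<sigma>" "\<sigma> \<le> s"
    then have \<sigma>: "\<sigma> \<in> {s0..s1}"
      using s by auto
    show "0 \<le> mass \<sigma>"
      by (rule hyp_integral_nonneg[OF admissible_densities(1) \<sigma>]) simp
    show "0 \<le> ?c \<sigma>"
      using Econ_nonneg[OF \<sigma>] \<sigma> s0_pos by simp
  qed (use s in simp)
  then show ?thesis
    by (simp only: integral_mult_right)
qed

lemma L2Hstar_weighted_derivative_le:
  assumes s: "s \<in> {s0..s1}" and \<alpha>: "\<alpha> \<in> {0, 1, 2}"
  shows "L2Hstar s (\<lambda>p. hs p * (hs p / fst p)\<^sup>2 * pd u \<alpha> p) \<le> 2 * sqrt (mass s) + 9 * sqrt (Econ s u)"
proof -
  have "hyp_integral (\<lambda>p. (hs p * (hs p / fst p)\<^sup>2 * pd u \<alpha> p)\<^sup>2) s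
      \<le> 4 * mass s + 81 * hyp_integral (energy_density u) s"
  proof (rule hyp_integral_le_lincomb[OF admissible_densities(3,1,2) s])
    fix x :: "real \<times> real"
    assume "norm x < (s\<^sup>2 - 1) / 2"
    then have "hyp s x \<in> Kcone"
      using s s0_pos by (simp add: hyp_in_Kcone_iff)
    then show "(hs (hyp s x) * (hs (hyp s x) / fst (hyp s x))\<^sup>2 * pd u \<alpha> (hyp s x))\<^sup>2
        \<le> 4 * (hs (hyp s x) / fst (hyp s x) * u (hyp s x))\<^sup>2 + 81 * energy_density u (hyp s x)"
      by (rule weighted_derivative_sq_le[OF _ \<alpha>])
  qed
  then have "L2Hstar s (\<lambda>p. hs p * (hs p / fst p)\<^sup>2 * pd u \<alpha> p) \<le> sqrt (4 * mass s + 81 * Econ s u)"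
    by (simp add: L2Hstar_eq_sqrt_hyp_integral[OF s] Econ_eq_hyp_integral[OF s])
  also have "\<dots> \<le> sqrt (4 * mass s) + sqrt (81 * Econ s u)"
    using Econ_nonneg[OF s] hyp_integral_nonneg[OF admissible_densities(1) s]
    by (intro sqrt_add_le_add_sqrt) auto
  also have "\<dots> = 2 * sqrt (mass s) + 9 * sqrt (Econ s u)"
    by (simp add: real_sqrt_mult)
  finally show ?thesis .
qed

lemma Fcon_sqrt_eq:
  "s \<in> {s0..s1} \<Longrightarrow>
    Fcon_sqrt s0 s u = sqrt (mass s0) + sqrt (Econ s u) + integral {s0..s} (\<lambda>\<sigma>. sqrt (Econ \<sigma> u) / \<sigma>)"
  using s0_less_s1 by (simp add: Fcon_sqrt_def L2Hstar_eq_sqrt_hyp_integral)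

lemma weighted_estimate:
  assumes s: "s \<in> {s0..s1}" and \<alpha>: "\<alpha> \<in> {0, 1, 2}"
  shows "L2Hstar s (\<lambda>p. hs p / fst p * u p) + L2Hstar s (\<lambda>p. hs p * (hs p / fst p)\<^sup>2 * pd u \<alpha> p)
    \<le> 15 * Fcon_sqrt s0 s u"
proof -
  have "0 \<le> integral {s0..s} (\<lambda>\<sigma>. sqrt (Econ \<sigma> u) / \<sigma>)"
    using s s0_pos Econ_nonneg
    by (intro integral_nonneg integrable_continuous_real continuous_on_subset[OF continuous_on_sqrt_Econ_div]) auto
  moreover have "0 \<le> sqrt (mass s0)" "0 \<le> sqrt (Econ s u)"
    using hyp_integral_nonneg[OF admissible_densities(1), of s0] s0_less_s1 Econ_nonneg[OF s] by simp_all
  ultimately show ?thesis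
    using L2Hstar_weighted_derivative_le[OF s \<alpha>] sqrt_mass_le[OF s] Fcon_sqrt_eq[OF s]
      L2Hstar_eq_sqrt_hyp_integral[OF s, of "\<lambda>p. hs p / fst p * u p"] by linarith
qed

end

theorem proposition2p3:
  shows "\<exists>C::real. \<forall>s0 s1 (u :: pt \<Rightarrow> real).
     1 < s0 \<and> s0 < s1 \<and> C1_on (Kslab s0 s1) u \<and> vanishes_near_cone_boundary (Kslab s0 s1) u \<longrightarrow>
     (\<forall>s\<in>{s0..s1}. \<forall>\<alpha>\<in>{0, 1, 2::nat}.
        L2Hstar s (\<lambda>p. hs p / fst p * u p)
        + L2Hstar s (\<lambda>p. hs p * (hs p / fst p)\<^sup>2 * pd u \<alpha> p)
        \<le> C * Fcon_sqrt s0 s u)"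
proof (intro exI[of _ 15] allI impI ballI)
  fix s0 s1 s :: real and u :: "pt \<Rightarrow> real" and \<alpha> :: nat
  assume H: "1 < s0 \<and> s0 < s1 \<and> C1_on (Kslab s0 s1) u \<and> vanishes_near_cone_boundary (Kslab s0 s1) u"
    and "s \<in> {s0..s1}" "\<alpha> \<in> {0, 1, 2}"
  obtain U u' where "open U" "Kslab s0 s1 \<subseteq> U" "\<forall>p\<in>U. (u has_derivative u' p) (at p)"
      "\<forall>v. continuous_on U (\<lambda>p. u' p v)"
    using H unfolding C1_on_def by blast
  moreover obtain N where "open N" "{(t, x). t = norm x + 1} \<subseteq> N" "\<forall>p\<in>N \<inter> Kslab s0 s1. u p = 0"
    using H unfolding vanishes_near_cone_boundary_def by blast
  ultimately interpret conformal_energy_setting s0 s1 N u U u'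
    using H by unfold_locales auto
  show "L2Hstar s (\<lambda>p. hs p / fst p * u p) + L2Hstar s (\<lambda>p. hs p * (hs p / fst p)\<^sup>2 * pd u \<alpha> p)
      \<le> 15 * Fcon_sqrt s0 s u"
    by (rule weighted_estimate) fact+
qed

end
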